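(* Let $\xi<-6$. There exists $\phi_0\in(0,\pi/4]$ such that for every $\phi\in(0,\phi_0]$ there is $c=c(\xi,\phi)>0$ such that for $z=u+\mathrm{i}v$, $$\operatorname{Re}[2\mathrm{i}\theta(z)]\ge c|v|\ \text{ for } z\in\Omega_{01}\cup\Omega_{02},\qquad \operatorname{Re}[2\mathrm{i}\theta(z)]\le -c|v|\ \text{ for } z\in\Omega_{03}\cup\Omega_{04}.$$
   Context: $\theta(z)=\frac12(z+z^{-1})\big[\xi-2+(z-z^{-1})^2\big]$. For $\xi<-6$ let $\zeta_1=\sqrt{(-\xi-\sqrt{\xi^2-36})/6}\in(0,1)$. With $z=u+\mathrm{i}v$: $\Omega_{01}=\{0<u<\zeta_1/2,\ 0<v<u\tan\phi\}$, $\Omega_{02}=\{-\zeta_1/2<u<0,\ 0<v<|u|\tan\phi\}$, $\Omega_{03}=\{-\zeta_1/2<u<0,\ -|u|\tan\phi<v<0\}$, $\Omega_{04}=\{0<u<\zeta_1/2,\ -u\tan\phi<v<0\}$. *)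

theory Defs
  imports "HOL-Analysis.Analysis"
begin

definition theta :: "real \<Rightarrow> complex \<Rightarrow> complex" where
  "theta \<xi> z = (1/2) * (z + inverse z) * (complex_of_real \<xi> - 2 + (z - inverse z)^2)"

definition zeta1 :: "real \<Rightarrow> real" where
  "zeta1 \<xi> = sqrt ((- \<xi> - sqrt (\<xi>^2 - 36)) / 6)"

definition Omega01 :: "real \<Rightarrow> real \<Rightarrow> complex set" where
  "Omega01 \<xi> \<phi> = {z. 0 < Re z \<and> Re z < zeta1 \<xi> / 2 \<and> 0 < Im z \<and> Im z < Re z * tan \<phi>}"

definition Omega02 :: "real \<Rightarrow> real \<Rightarrow> complex set" where
  "Omega02 \<xi> \<phi> = {z. - zeta1 \<xi> / 2 < Re z \<and> Re z < 0 \<and> 0 < Im z \<and> Im z < \<bar>Re z\<bar> * tan \<phi>}"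

definition Omega03 :: "real \<Rightarrow> real \<Rightarrow> complex set" where
  "Omega03 \<xi> \<phi> = {z. - zeta1 \<xi> / 2 < Re z \<and> Re z < 0 \<and> - \<bar>Re z\<bar> * tan \<phi> < Im z \<and> Im z < 0}"

definition Omega04 :: "real \<Rightarrow> real \<Rightarrow> complex set" where
  "Omega04 \<xi> \<phi> = {z. 0 < Re z \<and> Re z < zeta1 \<xi> / 2 \<and> - Re z * tan \<phi> < Im z \<and> Im z < 0}"

end

theory Submission
  imports Defs
begin

text \<open>With \<open>w = z + 1/z\<close> one has \<open>\<theta>(z) = (w\<^sup>3 + (\<xi> - 6) w) / 2\<close>, so that
  \<open>Re[2i\<theta>(z)] = v (1/|z|\<^sup>2 - 1) (3 (Re w)\<^sup>2 - (Im w)\<^sup>2 + \<xi> - 6)\<close>.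
  Writing \<open>s = \<zeta>\<^sub>1\<^sup>2\<close>, the number \<open>s\<close> is the root in \<open>(0, 1]\<close> of \<open>3s\<^sup>2 + \<xi>s + 3 = 0\<close>,
  i.e. \<open>\<xi> = -3s - 3/s\<close>. In the cone \<open>|v| \<le> |u|/4\<close> with \<open>u\<^sup>2 < s/4\<close> the point \<open>z\<close> is
  small, so \<open>Re w \<approx> u/|z|\<^sup>2\<close> is large, and both factors beside \<open>v\<close> are at least \<open>1\<close>.
  Hence \<open>\<phi>\<^sub>0 = arctan (1/4)\<close> and \<open>c = 1\<close> work.\<close>

lemma theta_eq_cubic_in_joukowski:
  assumes "z \<noteq> 0"
  shows "theta \<xi> z = (1/2) * ((z + inverse z)^3 + (\<xi> - 6) * (z + inverse z))"
proof -
  define w where "w = z + inverse z"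
  have "(z - inverse z)^2 = w^2 - 4"
    using assms by (simp add: w_def power2_eq_square algebra_simps)
  then have "theta \<xi> z = (1/2) * w * (\<xi> - 2 + (w^2 - 4))"
    by (simp add: theta_def w_def)
  also have "\<dots> = (1/2) * (w^3 + (\<xi> - 6) * w)"
    by (simp add: power3_eq_cube power2_eq_square algebra_simps)
  finally show ?thesis
    by (simp add: w_def)
qed

lemma Re_two_i_cubic:
  "Re (2 * \<i> * ((1/2) * (w^3 + (complex_of_real \<xi> - 6) * w))) =
     - Im w * (3 * Re w ^ 2 - Im w ^ 2 + \<xi> - 6)"
  by (simp add: power3_eq_cube power2_eq_square algebra_simps)

lemma Re_add_inverse: "Re (z + inverse z) = Re z * (1 + 1 / cmod z ^ 2)"
  by (simp add: cmod_power2 algebra_simps)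

lemma Im_add_inverse: "Im (z + inverse z) = Im z * (1 - 1 / cmod z ^ 2)"
  by (simp add: cmod_power2 algebra_simps)

lemma Re_two_i_theta_eq:
  assumes "z \<noteq> 0"
  shows "Re (2 * \<i> * theta \<xi> z) = Im z * ((1 / cmod z ^ 2 - 1) *
           (3 * Re (z + inverse z) ^ 2 - Im (z + inverse z) ^ 2 + \<xi> - 6))"
  unfolding theta_eq_cubic_in_joukowski[OF assms] Re_two_i_cubic
  by (simp add: cmod_power2 algebra_simps)

lemma zeta1_sq_pos_le_1_and_xi_eq:
  fixes \<xi> :: real
  assumes "\<xi> < -6"
  shows "0 < zeta1 \<xi> ^ 2" "zeta1 \<xi> ^ 2 \<le> 1" "\<xi> = - 3 * zeta1 \<xi> ^ 2 - 3 / zeta1 \<xi> ^ 2"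
proof -
  define r where "r = sqrt (\<xi>^2 - 36)"
  define s where "s = zeta1 \<xi> ^ 2"
  have "6^2 \<le> (-\<xi>)^2"
    using assms by (intro power_mono) auto
  then have r_sq: "r^2 = \<xi>^2 - 36" and r_nonneg: "r \<ge> 0"
    by (simp_all add: r_def)
  have "r^2 < (-\<xi>)^2"
    using r_sq by simp
  then have r_less: "r < - \<xi>"
    using assms by (intro power_less_imp_less_base[of r 2]) auto
  have "(- \<xi> - 6)^2 \<le> r^2"
    unfolding r_sq using assms by (simp add: power2_eq_square algebra_simps)
  then have r_ge: "- \<xi> - 6 \<le> r"
    using r_nonneg by (rule power2_le_imp_le)
  have s_eq: "s = (- \<xi> - r) / 6"
    using r_less by (simp add: s_def zeta1_def r_def)
  show s_pos: "0 < zeta1 \<xi> ^ 2" and "zeta1 \<xi> ^ 2 \<le> 1"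
    unfolding s_def[symmetric] s_eq using r_less r_ge by simp_all
  have "3 * s^2 + \<xi> * s + 3 = 0"
    unfolding s_eq using r_sq by (simp add: power2_eq_square field_simps)
  then show "\<xi> = - 3 * zeta1 \<xi> ^ 2 - 3 / zeta1 \<xi> ^ 2"
    unfolding s_def[symmetric] using s_pos[folded s_def] by (simp add: field_simps power2_eq_square)
qed

lemma joukowski_cubic_factor_ge_1:
  fixes z :: complex and s :: real
  assumes "Re z \<noteq> 0" "Im z ^ 2 \<le> Re z ^ 2 / 16" "0 < s" "s \<le> 1" "Re z ^ 2 < s / 4"
  shows "1 \<le> 3 * Re (z + inverse z) ^ 2 - Im (z + inverse z) ^ 2 - 3 * s - 3 / s - 6"
proof -
  define \<rho> where "\<rho> = cmod z ^ 2"
  define P where "P = 1 / \<rho>"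
  have \<rho>_pos: "\<rho> > 0"
    using assms(1) by (auto simp: \<rho>_def)
  have \<rho>_le: "\<rho> \<le> 17 / 16 * Re z ^ 2"
    using assms(2) by (simp add: \<rho>_def cmod_power2)
  then have "\<rho> < 17 * s / 64"
    using assms(5) by simp
  then have P_gt: "P > 64 / (17 * s)"
    using \<rho>_pos assms(3) by (simp add: P_def field_simps)
  have P_pos: "P > 0"
    using \<rho>_pos by (simp add: P_def)
  have "(1 - P)^2 \<le> (1 + P)^2"
    using P_pos by (simp add: power2_eq_square algebra_simps)
  then have "Im z ^ 2 * (1 - P)^2 \<le> Re z ^ 2 / 16 * (1 + P)^2"
    using assms(2) by (intro mult_mono) auto
  moreover have "Re (z + inverse z) = Re z * (1 + P)" "Im (z + inverse z) = Im z * (1 - P)"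
    unfolding P_def \<rho>_def by (rule Re_add_inverse Im_add_inverse)+
  ultimately have "3 * Re (z + inverse z) ^ 2 - Im (z + inverse z) ^ 2 \<ge> 47 / 16 * Re z ^ 2 * (1 + P)^2"
    by (simp add: power_mult_distrib)
  also have "47 / 16 * Re z ^ 2 * (1 + P)^2 \<ge> 47 / 17 * \<rho> * (1 + P)^2"
    using \<rho>_le by (intro mult_right_mono) auto
  also have "47 / 17 * \<rho> * (1 + P)^2 = 47 / 17 * (\<rho> + 2 + P)"
    using \<rho>_pos by (simp add: P_def power2_eq_square field_simps)
  also have "\<dots> \<ge> 47 / 17 * (2 + 64 / (17 * s))"
    using P_gt \<rho>_pos by simp
  finally have "3 * Re (z + inverse z) ^ 2 - Im (z + inverse z) ^ 2 \<ge> 47 / 17 * (2 + 64 / (17 * s))" .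
  moreover have "47 / 17 * (2 + 64 / (17 * s)) - 3 * s - 3 / s - 6 \<ge> 1"
  proof -
    have "s * s \<le> 1"
      using assms(3,4) by (simp add: mult_le_one)
    then have "0 \<le> (3008 / 289 - 3 - 3 * s * s - 25 / 17 * s) / s"
      using assms(3,4) by simp
    also have "\<dots> = 47 / 17 * (2 + 64 / (17 * s)) - 3 * s - 3 / s - 6 - 1"
      using assms(3) by (simp add: field_simps)
    finally show ?thesis
      by simp
  qed
  ultimately show ?thesis
    by linarith
qed

lemma Re_two_i_theta_eq_Im_mult_ge_1:
  fixes z :: complex and s :: real
  assumes "Re z \<noteq> 0" "\<bar>Im z\<bar> \<le> \<bar>Re z\<bar> / 4" "0 < s" "s \<le> 1" "Re z ^ 2 < s / 4"
  shows "\<exists>M \<ge> 1. Re (2 * \<i> * theta (- 3 * s - 3 / s) z) = Im z * M"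
proof -
  have "\<bar>Im z\<bar> ^ 2 \<le> (\<bar>Re z\<bar> / 4) ^ 2"
    using assms(2) by (intro power_mono) auto
  then have Im_sq: "Im z ^ 2 \<le> Re z ^ 2 / 16"
    by (simp add: power_divide)
  have "cmod z ^ 2 \<le> 1 / 2"
    using Im_sq assms(4,5) by (simp add: cmod_power2)
  moreover have "z \<noteq> 0"
    using assms(1) by auto
  ultimately have "1 \<le> 1 / cmod z ^ 2 - 1"
    by (simp add: field_simps)
  moreover note joukowski_cubic_factor_ge_1[OF assms(1) Im_sq assms(3-5)]
  ultimately have "1 * 1 \<le> (1 / cmod z ^ 2 - 1) *
      (3 * Re (z + inverse z) ^ 2 - Im (z + inverse z) ^ 2 + (- 3 * s - 3 / s) - 6)"
    by (intro mult_mono) auto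
  then show ?thesis
    unfolding Re_two_i_theta_eq[OF \<open>z \<noteq> 0\<close>] by auto
qed

lemma Omega_in_cone:
  assumes "z \<in> Omega01 \<xi> \<phi> \<union> Omega02 \<xi> \<phi> \<union> Omega03 \<xi> \<phi> \<union> Omega04 \<xi> \<phi>"
  shows "Re z \<noteq> 0" "\<bar>Re z\<bar> < zeta1 \<xi> / 2" "\<bar>Im z\<bar> < \<bar>Re z\<bar> * tan \<phi>"
  using assms by (auto simp: Omega01_def Omega02_def Omega03_def Omega04_def)

lemma Re_two_i_theta_on_Omega:
  fixes \<xi> \<phi> :: real
  assumes "\<xi> < -6" "tan \<phi> \<le> 1 / 4"
    and "z \<in> Omega01 \<xi> \<phi> \<union> Omega02 \<xi> \<phi> \<union> Omega03 \<xi> \<phi> \<union> Omega04 \<xi> \<phi>"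
  shows "\<exists>M \<ge> 1. Re (2 * \<i> * theta \<xi> z) = Im z * M"
proof -
  note cone = Omega_in_cone[OF assms(3)]
  note zeta1 = zeta1_sq_pos_le_1_and_xi_eq[OF assms(1)]
  have "\<bar>Re z\<bar> * tan \<phi> \<le> \<bar>Re z\<bar> / 4"
    using mult_left_mono[OF assms(2) abs_ge_zero[of "Re z"]] by simp
  then have "\<bar>Im z\<bar> \<le> \<bar>Re z\<bar> / 4"
    using cone(3) by linarith
  moreover have "\<bar>Re z\<bar> ^ 2 < (zeta1 \<xi> / 2) ^ 2"
    using cone(2) by (intro power_strict_mono) auto
  then have "Re z ^ 2 < zeta1 \<xi> ^ 2 / 4"
    by (simp add: power_divide)
  ultimately show ?thesis
    using Re_two_i_theta_eq_Im_mult_ge_1[OF cone(1) _ zeta1(1,2)] zeta1(3) by metis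
qed

theorem mainTheorem4:
  fixes \<xi> :: real
  assumes "\<xi> < -6"
  shows "\<exists>\<phi>0. 0 < \<phi>0 \<and> \<phi>0 \<le> pi/4 \<and>
    (\<forall>\<phi>. 0 < \<phi> \<and> \<phi> \<le> \<phi>0 \<longrightarrow>
      (\<exists>c>0. (\<forall>z \<in> Omega01 \<xi> \<phi> \<union> Omega02 \<xi> \<phi>.
                   Re (2 * \<i> * theta \<xi> z) \<ge> c * \<bar>Im z\<bar>) \<and>
               (\<forall>z \<in> Omega03 \<xi> \<phi> \<union> Omega04 \<xi> \<phi>.
                   Re (2 * \<i> * theta \<xi> z) \<le> - c * \<bar>Im z\<bar>)))"
proof (rule exI[of _ "arctan (1/4)"], intro conjI allI impI)
  show "0 < arctan (1/4)"
    by simp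
  show "arctan (1/4) \<le> pi/4"
    unfolding arctan_one[symmetric] arctan_le_iff by simp
  fix \<phi> assume "0 < \<phi> \<and> \<phi> \<le> arctan (1/4)"
  then have "tan \<phi> \<le> tan (arctan (1/4))"
    using arctan_less_pi4_pos[of "1/4"] by (intro tan_mono_le) auto
  then have "tan \<phi> \<le> 1/4"
    unfolding tan_arctan .
  then have estimate: "\<exists>M \<ge> 1. Re (2 * \<i> * theta \<xi> z) = Im z * M"
    if "z \<in> Omega01 \<xi> \<phi> \<union> Omega02 \<xi> \<phi> \<union> Omega03 \<xi> \<phi> \<union> Omega04 \<xi> \<phi>" for z
    using Re_two_i_theta_on_Omega[OF assms _ that] by blast
  have "Im z > 0" if "z \<in> Omega01 \<xi> \<phi> \<union> Omega02 \<xi> \<phi>" for z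
    using that by (auto simp: Omega01_def Omega02_def)
  moreover have "Im z < 0" if "z \<in> Omega03 \<xi> \<phi> \<union> Omega04 \<xi> \<phi>" for z
    using that by (auto simp: Omega03_def Omega04_def)
  ultimately show "\<exists>c>0. (\<forall>z \<in> Omega01 \<xi> \<phi> \<union> Omega02 \<xi> \<phi>.
                   Re (2 * \<i> * theta \<xi> z) \<ge> c * \<bar>Im z\<bar>) \<and>
               (\<forall>z \<in> Omega03 \<xi> \<phi> \<union> Omega04 \<xi> \<phi>.
                   Re (2 * \<i> * theta \<xi> z) \<le> - c * \<bar>Im z\<bar>)"
    using estimate by (intro exI[of _ 1]) (fastforce simp: mult_le_cancel_left1)
qed

end
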